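(* Let $A$, $c$, $B$ be as in the context. (i) A vector $u\in\mathbb N^n$ lies in $\mathcal O_c$ if and only if $Q_u\cap\mathbb Z^{n-d}=\{0\}$. (ii) If $u\in\mathcal O_c$ and $\tau$ is a face of $\Delta_c$, then the group relaxation $G^\tau(Au)$ solves $IP_{A,c}(Au)$ if and only if $Q_u^{\bar\tau}\cap\mathbb Z^{n-d}=\{0\}$.
   Context: $A\in\mathbb Z^{d\times n}$ has rank $d$, columns $a_1,\dots,a_n$, $cone(A)$ pointed, $\{x\in\mathbb R^n_{\ge0}:Ax=0\}=\{0\}$, $\mathbb ZA=\mathbb Z^d$, $\mathbb NA=\{Au:u\in\mathbb N^n\}$. For $c\in\mathbb Z^n$ and $b\in\mathbb NA$, $IP_{A,c}(b)=\min\{c\cdot x: Ax=b,\ x\in\mathbb N^n\}$. The regular triangulation $\Delta_c$ is the collection of $\sigma\subseteq\{1,\dots,n\}$ for which some $y\in\mathbb R^d$ has $y\cdot a_j=c_j$ ($j\in\sigma$), $y\cdot a_j<c_j$ ($j\notin\sigma$). $c$ is generic: $\Delta_c$ is a triangulation and every $IP_{A,c}(b)$, $b\in\mathbb NA$, has a unique optimal solution. $\mathcal O_c\subseteq\mathbb N^n$ is the set of optimal solutions of all $IP_{A,c}(b)$, $b\in\mathbb NA$. For a maximal face $\sigma$ of $\Delta_c$ let $\tilde c_{\bar\sigma}=c_{\bar\sigma}-c_\sigma A_\sigma^{-1}A_{\bar\sigma}$, and for a face $\tau\subseteq\sigma$ let $\tilde c_{\bar\tau}$ be its extension by zeros to $\mathbb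 R^{|\bar\tau|}$. The group relaxation $G^\tau(b)$ is $\min\{\tilde c_{\bar\tau}\cdot x_{\bar\tau}: A_\tau x_\tau+A_{\bar\tau}x_{\bar\tau}=b,\ x_{\bar\tau}\ge0,\ (x_\tau,x_{\bar\tau})\in\mathbb Z^n\}$; it solves $IP_{A,c}(b)$ if its optimal solution is non-negative. $B\in\mathbb Z^{n\times(n-d)}$ has columns forming a basis of $\{x\in\mathbb Z^n:Ax=0\}$; $B^{\bar\tau}$ deletes the rows of $B$ indexed by $\tau$, and $\pi_\tau:\mathbb R^n\to\mathbb R^{|\bar\tau|}$ deletes coordinates indexed by $\tau$. $Q_u=\{z\in\mathbb R^{n-d}: Bz\le u,\ (-cB)z\le0\}$ and $Q_u^{\bar\tau}=\{z\in\mathbb R^{n-d}: B^{\bar\tau}z\le\pi_\tau(u),\ (-cB)z\le0\}$. *)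

theory Defs
  imports Complex_Main
begin

text \<open>Dimensions d, n vary, so vectors are functions on nat that vanish
outside their index range {..<k}; the matrix A is a function A i j (row i < d, column j < n);
the lattice basis B is a function B j k (row j < n, column k < n-d).
Coordinates are 0-based: the index set {1,...,n} of the paper is {..<n}.\<close>

definition rvecs :: "nat \<Rightarrow> (nat \<Rightarrow> real) set" where
  "rvecs k = {x. \<forall>j\<ge>k. x j = 0}"

definition zvecs :: "nat \<Rightarrow> (nat \<Rightarrow> int) set" where
  "zvecs k = {x. \<forall>j\<ge>k. x j = 0}"

definition nvecs :: "nat \<Rightarrow> (nat \<Rightarrow> int) set" where
  "nvecs k = {x \<in> zvecs k. \<forall>j<k. 0 \<le> x j}"

definition zlat :: "nat \<Rightarrow> (nat \<Rightarrow> real) set" where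
  "zlat k = {z \<in> rvecs k. \<forall>i. z i \<in> \<int>}"

definition mv :: "nat \<Rightarrow> nat \<Rightarrow> (nat \<Rightarrow> nat \<Rightarrow> 'a::comm_ring_1) \<Rightarrow> (nat \<Rightarrow> 'a) \<Rightarrow> nat \<Rightarrow> 'a" where
  "mv m p M x = (\<lambda>i. if i < m then (\<Sum>j<p. M i j * x j) else 0)"

definition realA :: "(nat \<Rightarrow> nat \<Rightarrow> int) \<Rightarrow> nat \<Rightarrow> nat \<Rightarrow> real" where
  "realA A = (\<lambda>i j. real_of_int (A i j))"

definition ycol :: "nat \<Rightarrow> (nat \<Rightarrow> nat \<Rightarrow> int) \<Rightarrow> (nat \<Rightarrow> real) \<Rightarrow> nat \<Rightarrow> real" where
  "ycol d A y j = (\<Sum>i<d. y i * real_of_int (A i j))"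

definition rank_eq_rows :: "nat \<Rightarrow> nat \<Rightarrow> (nat \<Rightarrow> nat \<Rightarrow> int) \<Rightarrow> bool" where
  "rank_eq_rows d n A \<longleftrightarrow> (\<forall>v \<in> rvecs d. \<exists>x \<in> rvecs n. v = mv d n (realA A) x)"

definition cone_cols :: "nat \<Rightarrow> (nat \<Rightarrow> nat \<Rightarrow> int) \<Rightarrow> nat set \<Rightarrow> (nat \<Rightarrow> real) set" where
  "cone_cols d A S = {v. \<exists>l. (\<forall>j\<in>S. 0 \<le> l j) \<and>
      v = (\<lambda>i. if i < d then (\<Sum>j\<in>S. l j * real_of_int (A i j)) else 0)}"

definition pointed_cone :: "(nat \<Rightarrow> real) set \<Rightarrow> bool" where
  "pointed_cone K \<longleftrightarrow> (\<forall>v. v \<in> K \<and> (\<lambda>i. - v i) \<in> K \<longrightarrow> v = (\<lambda>_. 0))"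

definition lin_indep_cols :: "nat \<Rightarrow> (nat \<Rightarrow> nat \<Rightarrow> int) \<Rightarrow> nat set \<Rightarrow> bool" where
  "lin_indep_cols d A S \<longleftrightarrow> (\<forall>l. (\<forall>i<d. (\<Sum>j\<in>S. l j * real_of_int (A i j)) = 0) \<longrightarrow> (\<forall>j\<in>S. l j = 0))"

definition NA :: "nat \<Rightarrow> nat \<Rightarrow> (nat \<Rightarrow> nat \<Rightarrow> int) \<Rightarrow> (nat \<Rightarrow> int) set" where
  "NA d n A = mv d n A ` nvecs n"

definition cdot :: "nat \<Rightarrow> (nat \<Rightarrow> 'a::comm_ring_1) \<Rightarrow> (nat \<Rightarrow> 'a) \<Rightarrow> 'a" where
  "cdot n c x = (\<Sum>j<n. c j * x j)"

definition IP_opt :: "nat \<Rightarrow> nat \<Rightarrow> (nat \<Rightarrow> nat \<Rightarrow> int) \<Rightarrow> (nat \<Rightarrow> int) \<Rightarrow> (nat \<Rightarrow> int) \<Rightarrow> (nat \<Rightarrow> int) \<Rightarrow> bool" where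
  "IP_opt d n A c b x \<longleftrightarrow> x \<in> nvecs n \<and> mv d n A x = b \<and>
     (\<forall>x' \<in> nvecs n. mv d n A x' = b \<longrightarrow> cdot n c x \<le> cdot n c x')"

definition Oc :: "nat \<Rightarrow> nat \<Rightarrow> (nat \<Rightarrow> nat \<Rightarrow> int) \<Rightarrow> (nat \<Rightarrow> int) \<Rightarrow> (nat \<Rightarrow> int) set" where
  "Oc d n A c = {x. \<exists>b \<in> NA d n A. IP_opt d n A c b x}"

text \<open>the regular triangulation \<open>\<Delta>_c\<close> (as a collection of subsets of {..<n})\<close>
definition Delta :: "nat \<Rightarrow> nat \<Rightarrow> (nat \<Rightarrow> nat \<Rightarrow> int) \<Rightarrow> (nat \<Rightarrow> int) \<Rightarrow> nat set set" where
  "Delta d n A c = {\<sigma>. \<sigma> \<subseteq> {..<n} \<and> (\<exists>y \<in> rvecs d.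
       (\<forall>j\<in>\<sigma>. ycol d A y j = real_of_int (c j)) \<and>
       (\<forall>j\<in>{..<n} - \<sigma>. ycol d A y j < real_of_int (c j)))}"

definition is_triangulation :: "nat \<Rightarrow> nat \<Rightarrow> (nat \<Rightarrow> nat \<Rightarrow> int) \<Rightarrow> nat set set \<Rightarrow> bool" where
  "is_triangulation d n A T \<longleftrightarrow> T \<noteq> {} \<and>
     (\<forall>\<sigma>\<in>T. \<sigma> \<subseteq> {..<n} \<and> lin_indep_cols d A \<sigma>) \<and>
     (\<forall>\<sigma>\<in>T. \<forall>\<tau>. \<tau> \<subseteq> \<sigma> \<longrightarrow> \<tau> \<in> T) \<and>
     (\<Union>\<sigma>\<in>T. cone_cols d A \<sigma>) = cone_cols d A {..<n} \<and>
     (\<forall>\<sigma>\<in>T. \<forall>\<tau>\<in>T. cone_cols d A \<sigma> \<inter> cone_cols d A \<tau> = cone_cols d A (\<sigma> \<inter> \<tau>))"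

definition generic :: "nat \<Rightarrow> nat \<Rightarrow> (nat \<Rightarrow> nat \<Rightarrow> int) \<Rightarrow> (nat \<Rightarrow> int) \<Rightarrow> bool" where
  "generic d n A c \<longleftrightarrow> is_triangulation d n A (Delta d n A c) \<and>
     (\<forall>b \<in> NA d n A. \<exists>!x. IP_opt d n A c b x)"

definition maximal_face :: "nat set set \<Rightarrow> nat set \<Rightarrow> bool" where
  "maximal_face T \<sigma> \<longleftrightarrow> \<sigma> \<in> T \<and> (\<forall>\<rho>\<in>T. \<sigma> \<subseteq> \<rho> \<longrightarrow> \<rho> = \<sigma>)"

text \<open>\<open>c_\<sigma> A_\<sigma>^{-1}\<close>: the unique \<open>y \<in> \<real>^d\<close> with \<open>y \<cdot> a_j = c_j\<close> for \<open>j \<in> \<sigma>\<close>\<close>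
definition ysig :: "nat \<Rightarrow> (nat \<Rightarrow> nat \<Rightarrow> int) \<Rightarrow> (nat \<Rightarrow> int) \<Rightarrow> nat set \<Rightarrow> nat \<Rightarrow> real" where
  "ysig d A c \<sigma> = (THE y. y \<in> rvecs d \<and> (\<forall>j\<in>\<sigma>. ycol d A y j = real_of_int (c j)))"

text \<open>\<open>\<tilde>c\<close>: for \<open>j \<notin> \<sigma>\<close> it is \<open>c_j - c_\<sigma> A_\<sigma>^{-1} a_j\<close>; extended by zeros on \<open>\<sigma>\<close>
  (so on \<open>\<sigma> - \<tau>\<close> when used as \<open>\<tilde>c_{\<bar>\<tau>}\<close>)\<close>
definition ctilde :: "nat \<Rightarrow> (nat \<Rightarrow> nat \<Rightarrow> int) \<Rightarrow> (nat \<Rightarrow> int) \<Rightarrow> nat set \<Rightarrow> nat \<Rightarrow> real" where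
  "ctilde d A c \<sigma> j = (if j \<in> \<sigma> then 0 else real_of_int (c j) - ycol d A (ysig d A c \<sigma>) j)"

definition G_feas :: "nat \<Rightarrow> nat \<Rightarrow> (nat \<Rightarrow> nat \<Rightarrow> int) \<Rightarrow> nat set \<Rightarrow> (nat \<Rightarrow> int) \<Rightarrow> (nat \<Rightarrow> int) set" where
  "G_feas d n A \<tau> b = {x \<in> zvecs n. mv d n A x = b \<and> (\<forall>j\<in>{..<n} - \<tau>. 0 \<le> x j)}"

definition G_obj :: "nat \<Rightarrow> nat \<Rightarrow> (nat \<Rightarrow> nat \<Rightarrow> int) \<Rightarrow> (nat \<Rightarrow> int) \<Rightarrow> nat set \<Rightarrow> nat set \<Rightarrow> (nat \<Rightarrow> int) \<Rightarrow> real" where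
  "G_obj d n A c \<sigma> \<tau> x = (\<Sum>j\<in>{..<n} - \<tau>. ctilde d A c \<sigma> j * real_of_int (x j))"

definition G_opt :: "nat \<Rightarrow> nat \<Rightarrow> (nat \<Rightarrow> nat \<Rightarrow> int) \<Rightarrow> (nat \<Rightarrow> int) \<Rightarrow> nat set \<Rightarrow> nat set \<Rightarrow> (nat \<Rightarrow> int) \<Rightarrow> (nat \<Rightarrow> int) \<Rightarrow> bool" where
  "G_opt d n A c \<sigma> \<tau> b x \<longleftrightarrow> x \<in> G_feas d n A \<tau> b \<and>
     (\<forall>x' \<in> G_feas d n A \<tau> b. G_obj d n A c \<sigma> \<tau> x \<le> G_obj d n A c \<sigma> \<tau> x')"

text \<open>\<open>G^\<tau>(b)\<close> solves \<open>IP_{A,c}(b)\<close>: it has an optimal solution, and its optimal solution is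
  non-negative (stated for every optimal solution).\<close>
definition G_solves :: "nat \<Rightarrow> nat \<Rightarrow> (nat \<Rightarrow> nat \<Rightarrow> int) \<Rightarrow> (nat \<Rightarrow> int) \<Rightarrow> nat set \<Rightarrow> nat set \<Rightarrow> (nat \<Rightarrow> int) \<Rightarrow> bool" where
  "G_solves d n A c \<sigma> \<tau> b \<longleftrightarrow> (\<exists>x. G_opt d n A c \<sigma> \<tau> b x) \<and>
     (\<forall>x. G_opt d n A c \<sigma> \<tau> b x \<longrightarrow> x \<in> nvecs n)"

definition lattice_basis :: "nat \<Rightarrow> nat \<Rightarrow> (nat \<Rightarrow> nat \<Rightarrow> int) \<Rightarrow> (nat \<Rightarrow> nat \<Rightarrow> int) \<Rightarrow> bool" where
  "lattice_basis d n A B \<longleftrightarrow>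
     (\<forall>z \<in> zvecs (n - d). mv d n A (mv n (n - d) B z) = (\<lambda>_. 0)) \<and>
     (\<forall>x \<in> zvecs n. mv d n A x = (\<lambda>_. 0) \<longrightarrow> (\<exists>z \<in> zvecs (n - d). x = mv n (n - d) B z)) \<and>
     (\<forall>z \<in> zvecs (n - d). mv n (n - d) B z = (\<lambda>_. 0) \<longrightarrow> z = (\<lambda>_. 0))"

text \<open>\<open>Q_u^{\<bar>\<tau>}\<close>; with \<open>\<tau> = {}\<close> this is \<open>Q_u\<close>\<close>
definition Qtau :: "nat \<Rightarrow> nat \<Rightarrow> (nat \<Rightarrow> int) \<Rightarrow> (nat \<Rightarrow> nat \<Rightarrow> int) \<Rightarrow> nat set \<Rightarrow> (nat \<Rightarrow> int) \<Rightarrow> (nat \<Rightarrow> real) set" where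
  "Qtau d n c B \<tau> u = {z \<in> rvecs (n - d).
     (\<forall>j\<in>{..<n} - \<tau>. (\<Sum>k<n - d. real_of_int (B j k) * z k) \<le> real_of_int (u j)) \<and>
     - (\<Sum>j<n. real_of_int (c j) * (\<Sum>k<n - d. real_of_int (B j k) * z k)) \<le> 0}"

definition Q :: "nat \<Rightarrow> nat \<Rightarrow> (nat \<Rightarrow> int) \<Rightarrow> (nat \<Rightarrow> nat \<Rightarrow> int) \<Rightarrow> (nat \<Rightarrow> int) \<Rightarrow> (nat \<Rightarrow> real) set" where
  "Q d n c B u = {z \<in> rvecs (n - d).
     (\<forall>j<n. (\<Sum>k<n - d. real_of_int (B j k) * z k) \<le> real_of_int (u j)) \<and>
     - (\<Sum>j<n. real_of_int (c j) * (\<Sum>k<n - d. real_of_int (B j k) * z k)) \<le> 0}"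

end

(*
  Translating by a lattice vector of ker A, z \<mapsto> u - Bz is a bijection from \<int>^(n-d) onto the
  integer points of the fibre {x. Ax = Au}; it sends z to a point that is non-negative outside
  \<tau> and no more expensive than u exactly when z \<in> Q_u^\<tau>. So Q_u^\<tau> has no non-zero lattice
  point iff u is the unique c-minimum of the fibre with the \<tau>-coordinates unconstrained. For
  \<tau> = {} this is optimality of u in IP_{A,c}(Au), unique by genericity. For a maximal face
  \<sigma> \<supseteq> \<tau> the reduced cost c~ differs from c on the fibre by the constant y_\<sigma>\<cdot>Au, where y_\<sigma>
  is the unique vector with y_\<sigma>\<cdot>a_j = c_j on \<sigma> (unique because otherwise one could move
  along the difference and enlarge the face); so G^\<tau>(Au) minimises c over the same set.
*)
theory Submission
  imports Defs
begin

lemma mv_diff: "mv m p M (\<lambda>j. x j - x' j) = (\<lambda>i. mv m p M x i - mv m p M x' i)"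
  unfolding mv_def by (auto simp: sum_subtractf algebra_simps)

lemma mv_zero [simp]: "mv m p M (\<lambda>_. 0) = (\<lambda>_. 0)"
  by (simp add: mv_def fun_eq_iff)

lemma mv_in_zvecs: "mv m p M z \<in> zvecs m"
  unfolding mv_def zvecs_def by auto

lemma cdot_diff: "cdot n c (\<lambda>j. x j - x' j) = cdot n c x - cdot n c x'"
  unfolding cdot_def by (simp add: sum_subtractf algebra_simps)

lemma ycol_add_scaled: "ycol d A (\<lambda>i. y i + t * w i) j = ycol d A y j + t * ycol d A w j"
  unfolding ycol_def by (simp add: sum.distrib sum_distrib_left algebra_simps)

lemma ycol_diff: "ycol d A (\<lambda>i. y i - w i) j = ycol d A y j - ycol d A w j"
  unfolding ycol_def by (simp add: sum_subtractf algebra_simps)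

lemma ycol_uminus: "ycol d A (\<lambda>i. - w i) j = - ycol d A w j"
  unfolding ycol_def by (simp add: sum_negf)

lemma tight_set_in_Delta:
  assumes "y \<in> rvecs d" and "\<forall>j<n. ycol d A y j \<le> real_of_int (c j)"
  shows "{j. j < n \<and> ycol d A y j = real_of_int (c j)} \<in> Delta d n A c"
  unfolding Delta_def using assms by (auto intro!: bexI[of _ y] simp: less_le)

lemma maximal_face_ycol_nonpos:
  assumes mf: "maximal_face (Delta d n A c) \<sigma>"
    and w: "w \<in> rvecs d" "\<forall>j\<in>\<sigma>. ycol d A w j = 0" and "j0 < n"
  shows "ycol d A w j0 \<le> 0"
proof (rule ccontr)
  assume "\<not> ycol d A w j0 \<le> 0"
  from mf obtain y0 where y0: "y0 \<in> rvecs d" "\<forall>j\<in>\<sigma>. ycol d A y0 j = real_of_int (c j)"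
      "\<forall>j\<in>{..<n} - \<sigma>. ycol d A y0 j < real_of_int (c j)" and "\<sigma> \<subseteq> {..<n}"
    unfolding maximal_face_def Delta_def by auto
  define S where "S = {j. j < n \<and> ycol d A w j > 0}"
  define f where "f j = (real_of_int (c j) - ycol d A y0 j) / ycol d A w j" for j
  have "finite S" "S \<noteq> {}"
    using \<open>j0 < n\<close> \<open>\<not> ycol d A w j0 \<le> 0\<close> unfolding S_def by auto
  have S_outside: "j \<notin> \<sigma>" if "j \<in> S" for j
    using that w(2) unfolding S_def by force
  \<comment> \<open>the longest step from y0 along w that keeps every inequality y \<cdot> a_j \<le> c_j\<close>
  define t where "t = Min (f ` S)"
  have "t \<in> f ` S"
    using \<open>finite S\<close> \<open>S \<noteq> {}\<close> unfolding t_def by (intro Min_in) auto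
  then obtain js where js: "js \<in> S" "f js = t"
    by auto
  have t_le: "t \<le> f j" if "j \<in> S" for j
    using that \<open>finite S\<close> unfolding t_def by auto
  have "t > 0"
    using js S_outside[OF js(1)] y0(3) unfolding S_def f_def by auto
  define y where "y = (\<lambda>i. y0 i + t * w i)"
  have ycol_y: "ycol d A y j = ycol d A y0 j + t * ycol d A w j" for j
    unfolding y_def by (rule ycol_add_scaled)
  have "ycol d A y j \<le> real_of_int (c j)" if "j < n" for j
  proof (cases "j \<in> S")
    case True
    then show ?thesis
      using t_le[OF True] unfolding ycol_y f_def S_def by (simp add: pos_le_divide_eq mult.commute)
  next
    case False
    then have "t * ycol d A w j \<le> 0"
      using that \<open>t > 0\<close> unfolding S_def by (simp add: mult_nonneg_nonpos)
    moreover have "ycol d A y0 j \<le> real_of_int (c j)"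
      using y0(2,3) that by (cases "j \<in> \<sigma>") force+
    ultimately show ?thesis unfolding ycol_y by simp
  qed
  then have "{j. j < n \<and> ycol d A y j = real_of_int (c j)} \<in> Delta d n A c"
    using y0(1) w(1) by (intro tight_set_in_Delta) (auto simp: y_def rvecs_def)
  moreover have "\<sigma> \<subseteq> {j. j < n \<and> ycol d A y j = real_of_int (c j)}"
    using \<open>\<sigma> \<subseteq> {..<n}\<close> y0(2) w(2) unfolding ycol_y by auto
  moreover have "ycol d A y js = real_of_int (c js)"
    using js unfolding ycol_y f_def S_def by auto
  ultimately show False
    using mf S_outside[OF js(1)] js(1) unfolding maximal_face_def S_def by blast
qed

lemma rank_eq_rows_ycol_eq_zero:
  assumes rank: "rank_eq_rows d n A" and w: "w \<in> rvecs d" and ycol_w: "\<forall>j<n. ycol d A w j = 0"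
  shows "w = (\<lambda>_. 0)"
proof -
  obtain x where x: "x \<in> rvecs n" "w = mv d n (realA A) x"
    using rank w unfolding rank_eq_rows_def by blast
  have "(\<Sum>i<d. w i * w i) = (\<Sum>i<d. \<Sum>j<n. w i * (real_of_int (A i j) * x j))"
    by (rule sum.cong) (auto simp: x(2) mv_def realA_def sum_distrib_left)
  also have "\<dots> = (\<Sum>j<n. x j * ycol d A w j)"
    unfolding ycol_def by (subst sum.swap) (simp add: sum_distrib_left algebra_simps)
  also have "\<dots> = 0"
    using ycol_w by simp
  finally have "\<forall>i<d. w i = 0"
    by (simp add: sum_nonneg_eq_0_iff)
  with w show ?thesis
    unfolding rvecs_def by (auto simp: fun_eq_iff not_less[symmetric])
qed

lemma maximal_face_ycol_eq_zero:
  assumes rank: "rank_eq_rows d n A" and mf: "maximal_face (Delta d n A c) \<sigma>"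
    and w: "w \<in> rvecs d" "\<forall>j\<in>\<sigma>. ycol d A w j = 0"
  shows "w = (\<lambda>_. 0)"
proof (rule rank_eq_rows_ycol_eq_zero[OF rank w(1)], intro allI impI)
  fix j assume "j < n"
  have "(\<lambda>i. - w i) \<in> rvecs d" "\<forall>j\<in>\<sigma>. ycol d A (\<lambda>i. - w i) j = 0"
    using w unfolding rvecs_def by (auto simp: ycol_uminus)
  from maximal_face_ycol_nonpos[OF mf this \<open>j < n\<close>] maximal_face_ycol_nonpos[OF mf w \<open>j < n\<close>]
  show "ycol d A w j = 0"
    by (simp add: ycol_uminus)
qed

lemma ysig_tight:
  assumes rank: "rank_eq_rows d n A" and mf: "maximal_face (Delta d n A c) \<sigma>"
  shows "\<forall>j\<in>\<sigma>. ycol d A (ysig d A c \<sigma>) j = real_of_int (c j)"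
proof -
  from mf obtain y0 where y0: "y0 \<in> rvecs d" "\<forall>j\<in>\<sigma>. ycol d A y0 j = real_of_int (c j)"
    unfolding maximal_face_def Delta_def by auto
  have "y = y0" if "y \<in> rvecs d" "\<forall>j\<in>\<sigma>. ycol d A y j = real_of_int (c j)" for y
  proof -
    have "(\<lambda>i. y i - y0 i) = (\<lambda>_. 0)"
      using that y0 by (intro maximal_face_ycol_eq_zero[OF rank mf]) (auto simp: rvecs_def ycol_diff)
    then show ?thesis
      by (auto simp: fun_eq_iff)
  qed
  with y0 have "\<exists>!y. y \<in> rvecs d \<and> (\<forall>j\<in>\<sigma>. ycol d A y j = real_of_int (c j))"
    by blast
  from theI'[OF this] show ?thesis
    unfolding ysig_def by blast
qed

lemma G_obj_eq_cdot_minus_const: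
  assumes tight: "\<forall>j\<in>\<sigma>. ycol d A (ysig d A c \<sigma>) j = real_of_int (c j)" and "\<tau> \<subseteq> \<sigma>"
  shows "G_obj d n A c \<sigma> \<tau> x = real_of_int (cdot n c x)
           - (\<Sum>i<d. ysig d A c \<sigma> i * real_of_int (mv d n A x i))"
proof -
  define y where "y = ysig d A c \<sigma>"
  have "G_obj d n A c \<sigma> \<tau> x = (\<Sum>j<n. ctilde d A c \<sigma> j * real_of_int (x j))"
    unfolding G_obj_def
    by (rule sum.mono_neutral_left) (use \<open>\<tau> \<subseteq> \<sigma>\<close> in \<open>auto simp: ctilde_def\<close>)
  also have "\<dots> = (\<Sum>j<n. (real_of_int (c j) - ycol d A y j) * real_of_int (x j))"
    by (rule sum.cong) (use tight in \<open>auto simp: ctilde_def y_def\<close>)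
  also have "\<dots> = real_of_int (cdot n c x) - (\<Sum>j<n. \<Sum>i<d. y i * (real_of_int (A i j) * real_of_int (x j)))"
    unfolding cdot_def ycol_def by (simp add: sum_subtractf sum_distrib_left sum_distrib_right algebra_simps)
  also have "\<dots> = real_of_int (cdot n c x) - (\<Sum>i<d. y i * real_of_int (mv d n A x i))"
    by (subst sum.swap) (auto simp: mv_def sum_distrib_left intro!: sum.cong)
  finally show ?thesis
    unfolding y_def .
qed

lemma G_opt_iff_cdot_min:
  assumes rank: "rank_eq_rows d n A" and mf: "maximal_face (Delta d n A c) \<sigma>" and "\<tau> \<subseteq> \<sigma>"
  shows "G_opt d n A c \<sigma> \<tau> b x \<longleftrightarrow>
    x \<in> G_feas d n A \<tau> b \<and> (\<forall>x'\<in>G_feas d n A \<tau> b. cdot n c x \<le> cdot n c x')"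
proof -
  note G_obj_eq = G_obj_eq_cdot_minus_const[OF ysig_tight[OF rank mf] \<open>\<tau> \<subseteq> \<sigma>\<close>]
  have "G_obj d n A c \<sigma> \<tau> x \<le> G_obj d n A c \<sigma> \<tau> x' \<longleftrightarrow> cdot n c x \<le> cdot n c x'"
    if "x \<in> G_feas d n A \<tau> b" "x' \<in> G_feas d n A \<tau> b" for x x'
    using that unfolding G_obj_eq G_feas_def by auto
  then show ?thesis
    unfolding G_opt_def by blast
qed

lemma lattice_basis_fibre:
  assumes B: "lattice_basis d n A B" and u: "u \<in> zvecs n"
  shows "{x \<in> zvecs n. mv d n A x = mv d n A u} = (\<lambda>z j. u j - mv n (n - d) B z j) ` zvecs (n - d)"
proof (intro equalityI subsetI)
  fix x assume "x \<in> {x \<in> zvecs n. mv d n A x = mv d n A u}"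
  then have "(\<lambda>j. u j - x j) \<in> zvecs n" "mv d n A (\<lambda>j. u j - x j) = (\<lambda>_. 0)"
    using u by (auto simp: zvecs_def mv_diff)
  then obtain z where "z \<in> zvecs (n - d)" and z: "(\<lambda>j. u j - x j) = mv n (n - d) B z"
    using B unfolding lattice_basis_def by blast
  moreover have "x = (\<lambda>j. u j - mv n (n - d) B z j)"
  proof
    fix j show "x j = u j - mv n (n - d) B z j"
      using fun_cong[OF z, of j] by simp
  qed
  ultimately show "x \<in> (\<lambda>z j. u j - mv n (n - d) B z j) ` zvecs (n - d)"
    by (auto simp: image_iff fun_eq_iff intro!: bexI[of _ z])
next
  fix x assume "x \<in> (\<lambda>z j. u j - mv n (n - d) B z j) ` zvecs (n - d)"
  then obtain z where z: "z \<in> zvecs (n - d)" and x: "x = (\<lambda>j. u j - mv n (n - d) B z j)"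
    by blast
  have "mv d n A (mv n (n - d) B z) = (\<lambda>_. 0)"
    using B z unfolding lattice_basis_def by blast
  then show "x \<in> {x \<in> zvecs n. mv d n A x = mv d n A u}"
    using u mv_in_zvecs[of n "n - d" B z] by (auto simp: x zvecs_def mv_diff)
qed

lemma lattice_basis_eq_zero_iff:
  assumes "lattice_basis d n A B" and "z \<in> zvecs (n - d)"
  shows "mv n (n - d) B z = (\<lambda>_. 0) \<longleftrightarrow> z = (\<lambda>_. 0)"
  using assms unfolding lattice_basis_def by auto

definition unique_relaxed_opt ::
    "nat \<Rightarrow> nat \<Rightarrow> (nat \<Rightarrow> nat \<Rightarrow> int) \<Rightarrow> (nat \<Rightarrow> int) \<Rightarrow> nat set \<Rightarrow> (nat \<Rightarrow> int) \<Rightarrow> bool" where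
  "unique_relaxed_opt d n A c \<tau> u \<longleftrightarrow> u \<in> G_feas d n A \<tau> (mv d n A u) \<and>
     (\<forall>x \<in> G_feas d n A \<tau> (mv d n A u). cdot n c x \<le> cdot n c u \<longrightarrow> x = u)"

lemma nvecs_in_G_feas: "u \<in> nvecs n \<Longrightarrow> u \<in> G_feas d n A \<tau> (mv d n A u)"
  unfolding nvecs_def G_feas_def by auto

lemma unique_relaxed_opt_iff_lattice:
  assumes B: "lattice_basis d n A B" and u: "u \<in> nvecs n"
  shows "unique_relaxed_opt d n A c \<tau> u \<longleftrightarrow>
    (\<forall>z\<in>zvecs (n - d). (\<forall>j\<in>{..<n} - \<tau>. mv n (n - d) B z j \<le> u j)
        \<and> 0 \<le> cdot n c (mv n (n - d) B z) \<longrightarrow> z = (\<lambda>_. 0))" (is "_ \<longleftrightarrow> ?lattice")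
proof -
  have u_int: "u \<in> zvecs n"
    using u unfolding nvecs_def by auto
  have "G_feas d n A \<tau> (mv d n A u) = {x \<in> {x \<in> zvecs n. mv d n A x = mv d n A u}. \<forall>j\<in>{..<n} - \<tau>. 0 \<le> x j}"
    unfolding G_feas_def by auto
  then have "unique_relaxed_opt d n A c \<tau> u \<longleftrightarrow>
      (\<forall>z\<in>zvecs (n - d). (\<forall>j\<in>{..<n} - \<tau>. 0 \<le> u j - mv n (n - d) B z j)
        \<and> cdot n c (\<lambda>j. u j - mv n (n - d) B z j) \<le> cdot n c u
        \<longrightarrow> (\<lambda>j. u j - mv n (n - d) B z j) = u)"
    unfolding unique_relaxed_opt_def lattice_basis_fibre[OF B u_int] using nvecs_in_G_feas[OF u] by auto
  also have "\<dots> \<longleftrightarrow> ?lattice"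
  proof (intro ball_cong refl)
    fix z assume "z \<in> zvecs (n - d)"
    have "(\<lambda>j. u j - mv n (n - d) B z j) = u \<longleftrightarrow> mv n (n - d) B z = (\<lambda>_. 0)"
      by (auto simp: fun_eq_iff)
    then show "((\<forall>j\<in>{..<n} - \<tau>. 0 \<le> u j - mv n (n - d) B z j)
        \<and> cdot n c (\<lambda>j. u j - mv n (n - d) B z j) \<le> cdot n c u
        \<longrightarrow> (\<lambda>j. u j - mv n (n - d) B z j) = u) \<longleftrightarrow>
      ((\<forall>j\<in>{..<n} - \<tau>. mv n (n - d) B z j \<le> u j)
        \<and> 0 \<le> cdot n c (mv n (n - d) B z) \<longrightarrow> z = (\<lambda>_. 0))"
      using lattice_basis_eq_zero_iff[OF B \<open>z \<in> zvecs (n - d)\<close>] by (simp add: cdot_diff)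
  qed
  finally show ?thesis .
qed

lemma zlat_eq_image_zvecs: "zlat k = (\<lambda>z i. real_of_int (z i)) ` zvecs k"
proof (intro equalityI subsetI)
  fix r assume r: "r \<in> zlat k"
  then have "r = (\<lambda>i. real_of_int \<lfloor>r i\<rfloor>)"
    unfolding zlat_def by (auto simp: fun_eq_iff elim!: Ints_cases)
  moreover have "(\<lambda>i. \<lfloor>r i\<rfloor>) \<in> zvecs k"
    using r unfolding zlat_def rvecs_def zvecs_def by auto
  ultimately show "r \<in> (\<lambda>z i. real_of_int (z i)) ` zvecs k"
    by (rule image_eqI)
qed (auto simp: zlat_def rvecs_def zvecs_def)

lemma of_int_in_Qtau_iff:
  assumes "z \<in> zvecs (n - d)"
  shows "(\<lambda>k. real_of_int (z k)) \<in> Qtau d n c B \<tau> u \<longleftrightarrow>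
     (\<forall>j\<in>{..<n} - \<tau>. mv n (n - d) B z j \<le> u j) \<and> 0 \<le> cdot n c (mv n (n - d) B z)"
proof -
  have B_of_int: "(\<Sum>k<n - d. real_of_int (B j k) * real_of_int (z k)) = real_of_int (mv n (n - d) B z j)"
    if "j < n" for j
    using that by (simp add: mv_def)
  have "(\<Sum>j<n. real_of_int (c j) * (\<Sum>k<n - d. real_of_int (B j k) * real_of_int (z k)))
        = real_of_int (cdot n c (mv n (n - d) B z))"
    unfolding cdot_def by (simp add: B_of_int)
  with assms B_of_int show ?thesis
    unfolding Qtau_def zvecs_def rvecs_def by auto
qed

lemma Qtau_lattice_points_trivial_iff:
  assumes u: "u \<in> nvecs n"
  shows "Qtau d n c B \<tau> u \<inter> zlat (n - d) = {\<lambda>_. 0} \<longleftrightarrow>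
    (\<forall>z\<in>zvecs (n - d). (\<forall>j\<in>{..<n} - \<tau>. mv n (n - d) B z j \<le> u j)
        \<and> 0 \<le> cdot n c (mv n (n - d) B z) \<longrightarrow> z = (\<lambda>_. 0))"
proof -
  have zero: "(\<lambda>_. 0::int) \<in> zvecs (n - d)"
    unfolding zvecs_def by simp
  have "(\<lambda>k. real_of_int ((\<lambda>_. 0::int) k)) \<in> Qtau d n c B \<tau> u"
    using u unfolding of_int_in_Qtau_iff[OF zero] by (simp add: nvecs_def cdot_def)
  then have "(\<lambda>_. 0) \<in> Qtau d n c B \<tau> u \<inter> zlat (n - d)"
    using zero unfolding zlat_eq_image_zvecs by force
  then have "Qtau d n c B \<tau> u \<inter> zlat (n - d) = {\<lambda>_. 0} \<longleftrightarrow>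
      (\<forall>z\<in>zvecs (n - d). (\<lambda>k. real_of_int (z k)) \<in> Qtau d n c B \<tau> u
         \<longrightarrow> (\<lambda>k. real_of_int (z k)) = (\<lambda>_. 0))"
    unfolding zlat_eq_image_zvecs by blast
  then show ?thesis
    by (simp add: of_int_in_Qtau_iff fun_eq_iff)
qed

lemma unique_relaxed_opt_iff_Qtau:
  assumes "lattice_basis d n A B" and "u \<in> nvecs n"
  shows "unique_relaxed_opt d n A c \<tau> u \<longleftrightarrow> Qtau d n c B \<tau> u \<inter> zlat (n - d) = {\<lambda>_. 0}"
  using unique_relaxed_opt_iff_lattice[OF assms] Qtau_lattice_points_trivial_iff[OF assms(2)] by simp

lemma Q_eq_Qtau_empty: "Q d n c B u = Qtau d n c B {} u"
  unfolding Q_def Qtau_def by auto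

lemma Oc_iff_IP_opt: "u \<in> Oc d n A c \<longleftrightarrow> IP_opt d n A c (mv d n A u) u"
  unfolding Oc_def NA_def IP_opt_def by auto

lemma generic_IP_opt_unique:
  assumes "generic d n A c" and "IP_opt d n A c b x" and "IP_opt d n A c b x'"
  shows "x = x'"
proof -
  have "b \<in> NA d n A"
    using assms(2) unfolding IP_opt_def NA_def by auto
  with assms show ?thesis
    unfolding generic_def by blast
qed

lemma G_feas_empty: "G_feas d n A {} b = {x \<in> nvecs n. mv d n A x = b}"
  unfolding G_feas_def nvecs_def by auto

lemma Oc_iff_unique_relaxed_opt:
  assumes gen: "generic d n A c" and u: "u \<in> nvecs n"
  shows "u \<in> Oc d n A c \<longleftrightarrow> unique_relaxed_opt d n A c {} u"
proof
  assume "u \<in> Oc d n A c"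
  then have opt: "IP_opt d n A c (mv d n A u) u"
    by (simp add: Oc_iff_IP_opt)
  have "x = u" if "x \<in> nvecs n" "mv d n A x = mv d n A u" "cdot n c x \<le> cdot n c u" for x
  proof -
    have "IP_opt d n A c (mv d n A u) x"
      using that opt unfolding IP_opt_def by fastforce
    then show ?thesis
      using generic_IP_opt_unique[OF gen _ opt] by blast
  qed
  with u show "unique_relaxed_opt d n A c {} u"
    unfolding unique_relaxed_opt_def G_feas_empty by blast
next
  assume "unique_relaxed_opt d n A c {} u"
  then have "IP_opt d n A c (mv d n A u) u"
    unfolding unique_relaxed_opt_def G_feas_empty IP_opt_def by force
  then show "u \<in> Oc d n A c"
    by (simp add: Oc_iff_IP_opt)
qed

lemma G_solves_iff_unique_relaxed_opt:
  assumes rank: "rank_eq_rows d n A" and gen: "generic d n A c" and "u \<in> Oc d n A c"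
    and mf: "maximal_face (Delta d n A c) \<sigma>" and "\<tau> \<subseteq> \<sigma>"
  shows "G_solves d n A c \<sigma> \<tau> (mv d n A u) \<longleftrightarrow> unique_relaxed_opt d n A c \<tau> u"
proof -
  define b where "b = mv d n A u"
  define F where "F = G_feas d n A \<tau> b"
  have opt: "IP_opt d n A c b u"
    using \<open>u \<in> Oc d n A c\<close> unfolding b_def by (simp add: Oc_iff_IP_opt)
  then have "u \<in> F"
    unfolding F_def b_def IP_opt_def by (simp add: nvecs_in_G_feas)
  have G_opt: "G_opt d n A c \<sigma> \<tau> b x \<longleftrightarrow> x \<in> F \<and> (\<forall>x'\<in>F. cdot n c x \<le> cdot n c x')" for x
    unfolding F_def by (rule G_opt_iff_cdot_min[OF rank mf \<open>\<tau> \<subseteq> \<sigma>\<close>])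
  have "G_solves d n A c \<sigma> \<tau> b \<longleftrightarrow> (\<forall>x\<in>F. cdot n c x \<le> cdot n c u \<longrightarrow> x = u)"
  proof
    assume solves: "G_solves d n A c \<sigma> \<tau> b"
    then obtain x0 where x0: "G_opt d n A c \<sigma> \<tau> b x0"
      unfolding G_solves_def by blast
    \<comment> \<open>x0 is non-negative, hence feasible for the integer program, hence no cheaper than u\<close>
    have "cdot n c u \<le> cdot n c x0"
      using solves x0 opt unfolding G_solves_def G_opt F_def G_feas_def IP_opt_def by blast
    show "\<forall>x\<in>F. cdot n c x \<le> cdot n c u \<longrightarrow> x = u"
    proof (intro ballI impI)
      fix x assume "x \<in> F" "cdot n c x \<le> cdot n c u"
      then have "G_opt d n A c \<sigma> \<tau> b x"
        using x0 \<open>cdot n c u \<le> cdot n c x0\<close> unfolding G_opt by force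
      then have "x \<in> nvecs n"
        using solves unfolding G_solves_def by blast
      then have "IP_opt d n A c b x"
        using \<open>x \<in> F\<close> \<open>cdot n c x \<le> cdot n c u\<close> opt unfolding F_def G_feas_def IP_opt_def by force
      then show "x = u"
        using generic_IP_opt_unique[OF gen _ opt] by blast
    qed
  next
    assume unique: "\<forall>x\<in>F. cdot n c x \<le> cdot n c u \<longrightarrow> x = u"
    then have "G_opt d n A c \<sigma> \<tau> b u"
      using \<open>u \<in> F\<close> unfolding G_opt by force
    moreover have "x \<in> nvecs n" if "G_opt d n A c \<sigma> \<tau> b x" for x
      using that unique \<open>u \<in> F\<close> opt unfolding G_opt IP_opt_def by blast
    ultimately show "G_solves d n A c \<sigma> \<tau> b"
      unfolding G_solves_def by blast
  qed
  with \<open>u \<in> F\<close> show ?thesis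
    unfolding unique_relaxed_opt_def F_def b_def by blast
qed

theorem lemma2p9:
  fixes d n :: nat and A B :: "nat \<Rightarrow> nat \<Rightarrow> int" and c :: "nat \<Rightarrow> int"
  assumes rank: "rank_eq_rows d n A"
    and pointed: "pointed_cone (cone_cols d A {..<n})"
    and ker: "\<forall>x \<in> rvecs n. (\<forall>j<n. 0 \<le> x j) \<and> mv d n (realA A) x = (\<lambda>_. 0) \<longrightarrow> x = (\<lambda>_. 0)"
    and ZA: "mv d n A ` zvecs n = zvecs d"
    and gen: "generic d n A c"
    and B: "lattice_basis d n A B"
  shows "(\<forall>u \<in> nvecs n. u \<in> Oc d n A c \<longleftrightarrow> Q d n c B u \<inter> zlat (n - d) = {\<lambda>_. 0})
       \<and> (\<forall>u \<in> Oc d n A c. \<forall>\<sigma> \<tau>. maximal_face (Delta d n A c) \<sigma> \<and> \<tau> \<subseteq> \<sigma> \<longrightarrow>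
            (G_solves d n A c \<sigma> \<tau> (mv d n A u) \<longleftrightarrow> Qtau d n c B \<tau> u \<inter> zlat (n - d) = {\<lambda>_. 0}))"
proof (intro conjI ballI allI impI)
  fix u assume "u \<in> nvecs n"
  then show "u \<in> Oc d n A c \<longleftrightarrow> Q d n c B u \<inter> zlat (n - d) = {\<lambda>_. 0}"
    unfolding Q_eq_Qtau_empty
    by (simp add: Oc_iff_unique_relaxed_opt[OF gen] unique_relaxed_opt_iff_Qtau[OF B])
next
  fix u \<sigma> \<tau>
  assume "u \<in> Oc d n A c" and "maximal_face (Delta d n A c) \<sigma> \<and> \<tau> \<subseteq> \<sigma>"
  moreover have "u \<in> nvecs n"
    using \<open>u \<in> Oc d n A c\<close> unfolding Oc_iff_IP_opt IP_opt_def by blast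
  ultimately show "G_solves d n A c \<sigma> \<tau> (mv d n A u) \<longleftrightarrow> Qtau d n c B \<tau> u \<inter> zlat (n - d) = {\<lambda>_. 0}"
    by (simp add: G_solves_iff_unique_relaxed_opt[OF rank gen] unique_relaxed_opt_iff_Qtau[OF B])
qed

end
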